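(* Let $n\ge 1$ and let $\pi$ be a layered permutation of length $n$ which is not a decreasing permutation of even length. Then $\zeta_n$ contains a subsequence order-isomorphic to $\pi$.
   Context: A permutation of length $n$ is a word containing each letter of $[n]$ exactly once. For permutations $\pi$ of length $m$ and $\sigma$ of length $n$, $\pi\oplus\sigma$ is the permutation with $(\pi\oplus\sigma)(i)=\pi(i)$ for $i\le m$ and $\sigma(i-m)+m$ for $i>m$. A permutation is layered if it is a direct sum of decreasing permutations. Two words $u,v$ of length $k$ are order-isomorphic if $u(i)>u(j)\iff v(i)>v(j)$ for all $i,j$; a word $w$ contains a subsequence order-isomorphic to $\pi$ if some $w(i_1)\cdots w(i_n)$ with $i_1<\cdots<i_n$ is order-isomorphic to $\pi$. The word $z_n$ is the concatenation of $n$ runs $r_1\cdots r_n$, where for odd $k$, $r_k$ lists the odd integers in $[n]$ increasingly and for even $k$, $r_k$ lists the even integers in $[n]$ decreasingly. The permutation $\zeta_n$ of length $|z_n|$ is the unique permutation such that for $i\ne j$: $\zeta_n(i)>\zeta_n(j)$ iff either $z_n(i)>z_n(j)$, or $z_n(i)=z_n(j)$ and $i<j$. *)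

theory Defs
  imports Main "HOL-Library.Sublist"
begin

text \<open>Positions are 0-indexed
  internally (nth), which does not affect any of the notions below.\<close>

definition is_perm :: "nat list \<Rightarrow> bool" where
  "is_perm p \<longleftrightarrow> distinct p \<and> set p = {1..length p}"

definition decperm :: "nat \<Rightarrow> nat list" where
  "decperm k = rev [1..<k+1]"

definition dsum :: "nat list \<Rightarrow> nat list \<Rightarrow> nat list" where
  "dsum p s = p @ map (\<lambda>x. x + length p) s"

definition layered :: "nat list \<Rightarrow> bool" where
  "layered p \<longleftrightarrow> (\<exists>ks. p = foldl dsum [] (map decperm ks))"

definition order_iso :: "nat list \<Rightarrow> nat list \<Rightarrow> bool" where
  "order_iso u v \<longleftrightarrow> length u = length v \<and>
     (\<forall>i<length u. \<forall>j<length u. u ! i > u ! j \<longleftrightarrow> v ! i > v ! j)"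

definition contains :: "nat list \<Rightarrow> nat list \<Rightarrow> bool" where
  "contains w pi \<longleftrightarrow> (\<exists>u. subseq u w \<and> order_iso u pi)"

definition zrun :: "nat \<Rightarrow> nat \<Rightarrow> nat list" where
  "zrun n k = (if odd k then filter odd [1..<n+1] else rev (filter even [1..<n+1]))"

definition zword :: "nat \<Rightarrow> nat list" where
  "zword n = concat (map (zrun n) [1..<n+1])"

text \<open>zeta_n: the value at position i is one plus the number of positions j
  with zeta(j) < zeta(i), i.e. z(j) < z(i), or z(j) = z(i) and i < j.\<close>
definition zeta :: "nat \<Rightarrow> nat list" where
  "zeta n = (let z = zword n in
     map (\<lambda>i. Suc (card {j. j < length z \<and> (z ! j < z ! i \<or> (z ! j = z ! i \<and> i < j))}))
         [0..<length z])"

end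

theory Submission
  imports Defs
begin

text \<open>The occurrence of the value v in the run r_k of z_n is recorded as the cell (k, v), with
  k \<equiv> v (mod 2). A decreasing layer of size a fits on a diagonal (r, e), (r+1, e-1), ... of a
  consecutive runs and a consecutive values whenever r \<equiv> e (mod 2), and the layers of \<pi> are
  placed greedily, each one later in z_n and higher in \<zeta>_n than the previous ones. After
  layers of total size S the free cells lie beyond one of three frontiers: run S - 1 and value S,
  run S and value S - 1, or run S and value S (the last two for even S only). Each frontier
  leads to another one for the next layer; the only bad move is an even layer at the frontier
  (S, S), where the parity clash forces a diagonal that skips a run and so uses one run more
  than the budget n. This is harmless unless that layer is the last one, hence the exception
  \<pi> = decperm n with n even.\<close>

section \<open>Cells of z_n\<close>

definition cells :: "nat \<Rightarrow> (nat \<times> nat) set" where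
  "cells n = {c. 1 \<le> fst c \<and> fst c \<le> n \<and> 1 \<le> snd c \<and> snd c \<le> n \<and>
     (odd (fst c) \<longleftrightarrow> odd (snd c))}"

definition zcells :: "nat \<Rightarrow> (nat \<times> nat) list" where
  "zcells n = concat (map (\<lambda>k. map (Pair k) (zrun n k)) [1..<n+1])"

definition pos_less :: "nat \<times> nat \<Rightarrow> nat \<times> nat \<Rightarrow> bool" where
  "pos_less x y \<longleftrightarrow> fst x < fst y \<or>
     (fst x = fst y \<and> (if odd (fst x) then snd x < snd y else snd y < snd x))"

definition val_less :: "nat \<times> nat \<Rightarrow> nat \<times> nat \<Rightarrow> bool" where
  "val_less x y \<longleftrightarrow> snd x < snd y \<or> (snd x = snd y \<and> fst y < fst x)"

definition zval :: "nat \<Rightarrow> nat \<times> nat \<Rightarrow> nat" where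
  "zval n c = Suc (card {x \<in> cells n. val_less x c})"

lemma pos_less_trans: "pos_less x y \<Longrightarrow> pos_less y z \<Longrightarrow> pos_less x z"
  unfolding pos_less_def by (auto split: if_splits)

lemma pos_less_irrefl: "\<not> pos_less x x"
  unfolding pos_less_def by auto

lemma pos_less_same_snd: "pos_less x y \<Longrightarrow> snd x = snd y \<Longrightarrow> fst x < fst y"
  unfolding pos_less_def by (auto split: if_splits)

lemma val_less_irrefl: "\<not> val_less x x"
  unfolding val_less_def by auto

lemma val_less_asym: "val_less x y \<Longrightarrow> \<not> val_less y x"
  unfolding val_less_def by auto

lemma val_less_trans: "val_less x y \<Longrightarrow> val_less y z \<Longrightarrow> val_less x z"
  unfolding val_less_def by auto

lemma val_less_linear: "x \<noteq> y \<Longrightarrow> val_less x y \<or> val_less y x"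
  unfolding val_less_def by (cases x; cases y) auto

lemma sorted_wrt_subset_imp_subseq:
  assumes "transp P" "irreflp P"
    and "set xs \<subseteq> set ys" "sorted_wrt P xs" "sorted_wrt P ys"
  shows "subseq xs ys"
  using assms(3-)
proof (induction xs arbitrary: ys)
  case Nil
  then show ?case by simp
next
  case (Cons x xs)
  then obtain us vs where ys: "ys = us @ [x] @ vs"
    by (metis append_Cons append_Nil in_set_conv_decomp list.set_intros(1) subsetD)
  have "set xs \<subseteq> set vs"
  proof
    fix z assume "z \<in> set xs"
    then have "P x z" using Cons.prems(2) by simp
    moreover have "z \<in> set us \<Longrightarrow> P z x" using Cons.prems(3) by (simp add: ys sorted_wrt_append)
    ultimately show "z \<in> set vs"
      using Cons.prems(1) \<open>z \<in> set xs\<close> assms(1,2) ys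
      by (auto dest: transpD simp: irreflp_def)
  qed
  then have "subseq xs vs"
    using Cons ys by (simp add: sorted_wrt_append)
  then show ?case by (auto simp: ys)
qed

lemma zword_eq_map_snd_zcells: "zword n = map snd (zcells n)"
  by (simp add: zword_def zcells_def map_concat comp_def)

lemma set_zrun: "set (zrun n k) = {v. 1 \<le> v \<and> v \<le> n \<and> (odd v \<longleftrightarrow> odd k)}"
  by (auto simp: zrun_def)

lemma set_zcells: "set (zcells n) = cells n"
  by (auto simp: zcells_def set_zrun cells_def)

lemma sorted_zcells: "sorted_wrt pos_less (zcells n)"
proof -
  have "sorted_wrt (<) (filter P [1..<n+1])" for P
    by (rule sorted_wrt_filter) (simp del: upt_Suc)
  then have run: "sorted_wrt pos_less (map (Pair k) (zrun n k))" for k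
    by (simp add: zrun_def sorted_wrt_map pos_less_def sorted_wrt_rev)
  have "sorted_wrt pos_less (concat (map (\<lambda>k. map (Pair k) (zrun n k)) [1..<Suc m]))" for m
  proof (induction m)
    case (Suc m)
    have "\<forall>x\<in>set (concat (map (\<lambda>k. map (Pair k) (zrun n k)) [1..<Suc m])).
        \<forall>y\<in>set (map (Pair (Suc m)) (zrun n (Suc m))). pos_less x y"
      by (auto simp: pos_less_def)
    then show ?case
      using Suc run[of "Suc m"] by (simp add: sorted_wrt_append upt_Suc_append del: upt_Suc)
  qed simp
  then show ?thesis by (simp add: zcells_def)
qed

lemma distinct_zcells: "distinct (zcells n)"
proof -
  have "sorted_wrt pos_less xs \<Longrightarrow> distinct xs" for xs
    by (induction xs) (auto simp: pos_less_irrefl)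
  then show ?thesis by (simp add: sorted_zcells)
qed

lemma zeta_eq_map_zval: "zeta n = map (zval n) (zcells n)"
proof (rule nth_equalityI)
  let ?y = "zcells n"
  let ?L = "length ?y"
  show "length (zeta n) = length (map (zval n) ?y)"
    by (simp add: zeta_def zword_eq_map_snd_zcells Let_def)
  fix i assume "i < length (zeta n)"
  then have i: "i < ?L" by (simp add: zeta_def zword_eq_map_snd_zcells Let_def)
  have same_snd: "i < j \<longleftrightarrow> fst (?y ! i) < fst (?y ! j)"
    if "j < ?L" "snd (?y ! j) = snd (?y ! i)" for j
    using i that sorted_wrt_nth_less[OF sorted_zcells] pos_less_same_snd
    by (metis linorder_neqE_nat not_less_iff_gr_or_eq)
  have "zeta n ! i
      = Suc (card {j. j < ?L \<and> (snd (?y ! j) < snd (?y ! i) \<or> (snd (?y ! j) = snd (?y ! i) \<and> i < j))})"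
    using i by (simp add: zeta_def zword_eq_map_snd_zcells Let_def cong: conj_cong)
  also have "{j. j < ?L \<and> (snd (?y ! j) < snd (?y ! i) \<or> (snd (?y ! j) = snd (?y ! i) \<and> i < j))}
      = {j. j < ?L \<and> val_less (?y ! j) (?y ! i)}"
    using same_snd by (auto simp: val_less_def)
  also have "card \<dots> = card ((!) ?y ` {j. j < ?L \<and> val_less (?y ! j) (?y ! i)})"
    by (rule card_image[symmetric]) (simp add: inj_on_nth distinct_zcells)
  also have "(!) ?y ` {j. j < ?L \<and> val_less (?y ! j) (?y ! i)} = {x \<in> cells n. val_less x (?y ! i)}"
    by (fastforce simp: set_zcells[symmetric] in_set_conv_nth image_iff)
  finally show "zeta n ! i = map (zval n) ?y ! i"
    using i by (simp add: zval_def)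
qed

lemma finite_cells: "finite (cells n)"
  by (rule finite_subset[of _ "{1..n} \<times> {1..n}"]) (auto simp: cells_def)

lemma zval_less_iff:
  assumes "x \<in> cells n" "y \<in> cells n"
  shows "zval n x < zval n y \<longleftrightarrow> val_less x y"
proof -
  have mono: "zval n u < zval n w" if "u \<in> cells n" "val_less u w" for u w
  proof -
    have "{z \<in> cells n. val_less z u} \<subset> {z \<in> cells n. val_less z w}"
      using that val_less_trans val_less_asym by blast
    then show ?thesis
      by (simp add: zval_def psubset_card_mono finite_cells)
  qed
  show ?thesis
    using mono[OF assms(1)] mono[OF assms(2)] val_less_linear[of x y] by fastforce
qed

section \<open>Realizing patterns by cells\<close>

definition realizes :: "(nat \<times> nat) list \<Rightarrow> nat list \<Rightarrow> bool" where
  "realizes cs p \<longleftrightarrow> length cs = length p \<and>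
     (\<forall>i<length p. \<forall>j<length p. p ! j < p ! i \<longleftrightarrow> val_less (cs ! j) (cs ! i))"

definition realizable :: "(nat \<times> nat) set \<Rightarrow> nat list \<Rightarrow> bool" where
  "realizable A p \<longleftrightarrow> (\<exists>cs. realizes cs p \<and> sorted_wrt pos_less cs \<and> set cs \<subseteq> A)"

lemma realizable_mono: "realizable A p \<Longrightarrow> A \<subseteq> B \<Longrightarrow> realizable B p"
  unfolding realizable_def by blast

lemma contains_zeta_if_realizable:
  assumes "realizable (cells n) p"
  shows "contains (zeta n) p"
proof -
  obtain cs where cs: "realizes cs p" "sorted_wrt pos_less cs" "set cs \<subseteq> cells n"
    using assms by (auto simp: realizable_def)
  have "subseq cs (zcells n)"
    using cs(2,3) sorted_zcells
    by (intro sorted_wrt_subset_imp_subseq[of pos_less])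
       (auto simp: transp_def irreflp_def set_zcells pos_less_irrefl intro: pos_less_trans)
  then have "subseq (map (zval n) cs) (zeta n)"
    by (simp add: zeta_eq_map_zval subseq_map)
  moreover have "order_iso (map (zval n) cs) p"
  proof -
    have "\<forall>i<length cs. cs ! i \<in> cells n"
      using cs(3) nth_mem by blast
    then show ?thesis
      using cs(1) by (auto simp: order_iso_def realizes_def zval_less_iff)
  qed
  ultimately show ?thesis
    by (auto simp: contains_def)
qed

lemma realizes_append:
  assumes "realizes xs p" "realizes ys q"
    and "\<forall>a\<in>set p. \<forall>b\<in>set q. a < b" "\<forall>x\<in>set xs. \<forall>y\<in>set ys. val_less x y"
  shows "realizes (xs @ ys) (p @ q)"
proof -
  have "p ! i < q ! j" if "i < length p" "j < length q" for i j
    using assms(3) that by simp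
  moreover have "val_less (xs ! i) (ys ! j)" if "i < length xs" "j < length ys" for i j
    using assms(4) that by simp
  ultimately show ?thesis
    using assms(1,2) unfolding realizes_def
    by (auto simp: nth_append dest: val_less_asym)
       (metis add_diff_inverse_nat less_asym nat_add_left_cancel_less)
qed

lemma realizable_dsum:
  assumes "realizable A p" "realizable B q"
    and "\<forall>x\<in>A. \<forall>y\<in>B. pos_less x y \<and> val_less x y"
    and "\<forall>a\<in>set p. a \<le> length p" "\<forall>b\<in>set q. 0 < b"
  shows "realizable (A \<union> B) (dsum p q)"
proof -
  obtain xs ys where xs: "realizes xs p" "sorted_wrt pos_less xs" "set xs \<subseteq> A"
    and ys: "realizes ys q" "sorted_wrt pos_less ys" "set ys \<subseteq> B"
    using assms(1,2) by (auto simp: realizable_def)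
  have "realizes ys (map (\<lambda>b. b + length p) q)"
    using ys(1) by (simp add: realizes_def)
  then have "realizes (xs @ ys) (dsum p q)"
    unfolding dsum_def using xs ys assms(3-)
    by (intro realizes_append) fastforce+
  moreover have "sorted_wrt pos_less (xs @ ys)"
    using xs ys assms(3) by (auto simp: sorted_wrt_append)
  ultimately show ?thesis
    unfolding realizable_def using xs(3) ys(3) by (intro exI[of _ "xs @ ys"]) auto
qed

lemma length_decperm [simp]: "length (decperm a) = a"
  by (simp add: decperm_def del: upt_Suc)

lemma decperm_nth: "i < a \<Longrightarrow> decperm a ! i = a - i"
  by (simp add: decperm_def rev_nth del: upt_Suc)

lemma set_decperm: "set (decperm a) = {1..a}"
  by (auto simp: decperm_def)

lemma realizes_decperm:
  assumes "sorted_wrt (\<lambda>x y. val_less y x) cs"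
  shows "realizes cs (decperm (length cs))"
  unfolding realizes_def
proof (intro conjI allI impI)
  fix i j assume "i < length (decperm (length cs))" "j < length (decperm (length cs))"
  then have "i < length cs" "j < length cs" by simp_all
  then show "decperm (length cs) ! j < decperm (length cs) ! i \<longleftrightarrow> val_less (cs ! j) (cs ! i)"
    using sorted_wrt_nth_less[OF assms] val_less_asym val_less_irrefl
    by (cases i j rule: linorder_cases) (auto simp: decperm_nth)
qed simp

definition dsum_decperms :: "nat list \<Rightarrow> nat list" where
  "dsum_decperms ks = foldl dsum [] (map decperm ks)"

lemma dsum_Nil [simp]: "dsum [] q = q" "dsum p [] = p"
  by (simp_all add: dsum_def)

lemma dsum_assoc: "dsum (dsum p q) r = dsum p (dsum q r)"
  by (simp add: dsum_def add.assoc)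

lemma foldl_dsum: "foldl dsum p ps = dsum p (foldl dsum [] ps)"
proof (induction ps arbitrary: p)
  case (Cons q ps)
  have "foldl dsum p (q # ps) = dsum (dsum p q) (foldl dsum [] ps)"
    by (simp only: foldl_Cons Cons.IH[of "dsum p q"])
  also have "\<dots> = dsum p (dsum q (foldl dsum [] ps))"
    by (rule dsum_assoc)
  also have "dsum q (foldl dsum [] ps) = foldl dsum q ps"
    by (rule Cons.IH[symmetric])
  finally show ?case by simp
qed simp

lemma dsum_decperms_Nil [simp]: "dsum_decperms [] = []"
  by (simp add: dsum_decperms_def)

lemma dsum_decperms_Cons: "dsum_decperms (a # ks) = dsum (decperm a) (dsum_decperms ks)"
  by (simp add: dsum_decperms_def foldl_dsum[of "decperm a"])

lemma dsum_decperms_filter_pos: "dsum_decperms (filter (\<lambda>a. 0 < a) ks) = dsum_decperms ks"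
  by (induction ks) (auto simp: dsum_decperms_Cons decperm_def)

lemma length_dsum_decperms: "length (dsum_decperms ks) = sum_list ks"
  by (induction ks) (auto simp: dsum_decperms_Cons dsum_def)

lemma dsum_decperms_pos: "\<forall>b\<in>set (dsum_decperms ks). 0 < b"
  by (induction ks) (auto simp: dsum_decperms_Cons dsum_def set_decperm)

section \<open>Placing the layers\<close>

text \<open>beyond R V c: the cell c comes after, and is larger than, every cell with run at most R
  and value at most V. It may lie in run R itself only if R is odd, as odd runs increase.\<close>

definition beyond :: "nat \<Rightarrow> nat \<Rightarrow> nat \<times> nat \<Rightarrow> bool" where
  "beyond R V c \<longleftrightarrow> V < snd c \<and> (R < fst c \<or> (fst c = R \<and> odd R))"

definition region :: "nat \<Rightarrow> nat \<Rightarrow> nat \<Rightarrow> (nat \<times> nat) set" where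
  "region R V N = {c \<in> cells N. beyond R V c}"

lemma region_antimono: "R \<le> R' \<Longrightarrow> V \<le> V' \<Longrightarrow> region R' V' N \<subseteq> region R V N"
  by (auto simp: region_def beyond_def)

lemma region_Suc_even: "even R \<Longrightarrow> region (Suc R) V N = region R V N"
  by (auto simp: region_def beyond_def)

lemma realizable_Cons_layer:
  assumes "sorted_wrt (\<lambda>x y. pos_less x y \<and> val_less y x) ls" "length ls = a"
    and "set ls \<subseteq> region R V N" "\<forall>c\<in>set ls. fst c \<le> R' \<and> snd c \<le> V'"
    and "realizable (region R' V' N) (dsum_decperms ks)" "R \<le> R'" "V \<le> V'"
  shows "realizable (region R V N) (dsum_decperms (a # ks))"
proof -
  have "sorted_wrt (\<lambda>x y. val_less y x) ls" "sorted_wrt pos_less ls"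
    by (rule sorted_wrt_mono_rel[OF _ assms(1)]; simp)+
  then have "realizable (set ls) (decperm a)"
    using assms(2) realizes_decperm by (auto simp: realizable_def)
  moreover have "pos_less x y \<and> val_less x y" if "x \<in> set ls" "y \<in> region R' V' N" for x y
  proof -
    have "fst x \<le> R'" "snd x \<le> V'" "beyond R' V' y"
      using assms(4) that by (auto simp: region_def)
    then show ?thesis
      by (cases "fst x = fst y") (auto simp: beyond_def pos_less_def val_less_def)
  qed
  ultimately have "realizable (set ls \<union> region R' V' N) (dsum (decperm a) (dsum_decperms ks))"
    using assms(5) dsum_decperms_pos by (intro realizable_dsum) (auto simp: set_decperm)
  moreover have "set ls \<union> region R' V' N \<subseteq> region R V N"
    using assms(3,6,7) region_antimono by blast
  ultimately show ?thesis
    by (auto simp: dsum_decperms_Cons intro: realizable_mono)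
qed

definition diag :: "nat \<Rightarrow> nat \<Rightarrow> nat \<Rightarrow> (nat \<times> nat) list" where
  "diag r e a = map (\<lambda>i. (r + i, e - i)) [0..<a]"

lemma sorted_diag: "sorted_wrt (\<lambda>x y. pos_less x y \<and> val_less y x) (diag r e a)"
  unfolding diag_def sorted_wrt_map
  by (rule sorted_wrt_mono_rel[OF _ sorted_wrt_upt]) (auto simp: pos_less_def val_less_def)

lemma odd_add_iff_odd_diff:
  "i \<le> (e::nat) \<Longrightarrow> (odd (r + i) \<longleftrightarrow> odd (e - i)) \<longleftrightarrow> (odd r \<longleftrightarrow> odd e)"
  by (metis le_add_diff_inverse2 even_add)

lemma realizable_Cons_diag:
  assumes "realizable (region (r + a - 1) e N) (dsum_decperms ks)"
    and "odd r \<longleftrightarrow> odd e" "R < r \<or> (r = R \<and> odd R)"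
    and "V + a \<le> e" "0 < a" "r + a \<le> Suc N" "e \<le> N"
  shows "realizable (region R V N) (dsum_decperms (a # ks))"
proof (rule realizable_Cons_layer[OF sorted_diag _ _ _ assms(1)])
  show "set (diag r e a) \<subseteq> region R V N"
  proof
    fix c assume "c \<in> set (diag r e a)"
    then obtain i where "i < a" "c = (r + i, e - i)"
      by (auto simp: diag_def)
    with assms(2-) show "c \<in> region R V N"
      by (auto simp: region_def beyond_def cells_def odd_add_iff_odd_diff dest: odd_pos)
  qed
qed (use assms(2-) in \<open>auto simp: diag_def\<close>)

text \<open>The layer (r, e), (r+2, e), (r+3, e-1), ...: one value fewer than a diagonal, at the cost
  of one more run.\<close>

lemma realizable_Cons_diag_skip:
  assumes "realizable (region (r + a) e N) (dsum_decperms ks)"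
    and "odd r \<longleftrightarrow> odd e" "R < r \<or> (r = R \<and> odd R)"
    and "V + a \<le> Suc e" "2 \<le> a" "r + a \<le> N" "e \<le> N"
  shows "realizable (region R V N) (dsum_decperms (a # ks))"
proof (rule realizable_Cons_layer[of "(r, e) # diag (r + 2) e (a - 1)", OF _ _ _ _ assms(1)])
  show "sorted_wrt (\<lambda>x y. pos_less x y \<and> val_less y x) ((r, e) # diag (r + 2) e (a - 1))"
    unfolding sorted_wrt.simps(2)
    by (intro conjI sorted_diag) (auto simp: diag_def pos_less_def val_less_def)
  show "set ((r, e) # diag (r + 2) e (a - 1)) \<subseteq> region R V N"
  proof
    fix c assume "c \<in> set ((r, e) # diag (r + 2) e (a - 1))"
    then consider "c = (r, e)" | i where "i < a - 1" "c = (r + 2 + i, e - i)"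
      by (auto simp: diag_def)
    then show "c \<in> region R V N"
      using assms(2-) odd_add_iff_odd_diff[of _ e "r + 2"]
      by cases (auto simp: region_def beyond_def cells_def dest: odd_pos)
  qed
qed (use assms(2-) in \<open>auto simp: diag_def\<close>)

lemma realizable_Nil: "realizable A []"
  by (auto simp: realizable_def realizes_def)

lemma realizable_one_then_even:
  assumes "odd S" "even b" "0 < b"
  shows "realizable (region (S - 1) S (S + 1 + b)) (dsum_decperms [1, b])"
proof (rule realizable_Cons_diag[where r = S and e = "S + 2"])
  show "realizable (region (S + 1 - 1) (S + 2) (S + 1 + b)) (dsum_decperms [b])"
    by (rule realizable_Cons_diag_skip[where r = "S + 1" and e = "S + 1 + b"])
       (use assms in \<open>auto simp: realizable_Nil\<close>)
qed (use assms in \<open>auto dest: odd_pos\<close>)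

text \<open>The induction step: the hypotheses describe the layers after a, at the three frontiers
  for S + a.\<close>

context
  fixes S a N :: nat and rest :: "nat list"
  assumes a: "0 < a" and pos: "\<forall>b\<in>set rest. 0 < b" and N: "N = S + a + sum_list rest"
    and run_slack: "realizable (region (S + a - 1) (S + a) N) (dsum_decperms rest)"
    and value_slack: "even (S + a) \<Longrightarrow>
      realizable (region (S + a) (S + a - 1) N) (dsum_decperms rest)"
    and tight: "even (S + a) \<Longrightarrow> (\<forall>b. rest = [b] \<longrightarrow> odd b) \<Longrightarrow>
      realizable (region (S + a) (S + a) N) (dsum_decperms rest)"
begin

lemma realizable_tight_odd:
  "odd (S + a) \<Longrightarrow> realizable (region (S + a) (S + a) N) (dsum_decperms rest)"
  using run_slack region_Suc_even[of "S + a - 1"] a by simp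

lemma realizable_Cons_value_slack:
  assumes "even S" "0 < S"
  shows "realizable (region S (S - 1) N) (dsum_decperms (a # rest))"
proof (cases "odd a")
  case True
  show ?thesis
    by (rule realizable_Cons_diag[where r = "S + 1" and e = "S + a"])
       (use realizable_tight_odd True assms a in \<open>auto simp: N\<close>)
next
  case False
  show ?thesis
    by (rule realizable_Cons_diag[where r = "S + 1" and e = "S + a - 1"])
       (use value_slack False assms a in \<open>auto simp: N\<close>)
qed

lemma realizable_Cons_tight:
  assumes "even S" "\<forall>b. a # rest = [b] \<longrightarrow> odd b"
  shows "realizable (region S S N) (dsum_decperms (a # rest))"
proof (cases "odd a")
  case True
  show ?thesis
    by (rule realizable_Cons_diag[where r = "S + 1" and e = "S + a"])
       (use realizable_tight_odd True assms a in \<open>auto simp: N\<close>)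
next
  case False
  then obtain b rest' where "rest = b # rest'"
    using assms(2) by (cases rest) auto
  then have "0 < sum_list rest"
    using pos by simp
  moreover have "realizable (region (S + 1 + a) (S + a - 1) N) (dsum_decperms rest)"
    using value_slack False assms(1) region_Suc_even[of "S + a"] by simp
  ultimately show ?thesis
    by (intro realizable_Cons_diag_skip[where r = "S + 1" and e = "S + a - 1"])
       (use False assms a in \<open>auto simp: N\<close>)
qed

lemma realizable_Cons_run_slack:
  assumes "0 < S"
  shows "realizable (region (S - 1) S N) (dsum_decperms (a # rest))"
proof -
  have "odd a \<Longrightarrow> a = 1 \<or> 3 \<le> a"
    using a by presburger
  then consider "even a" | "odd a" "even S" | "odd S" "a = 1" | "odd a" "odd S" "3 \<le> a"
    by blast
  then show ?thesis
  proof cases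
    case 1
    show ?thesis
      by (rule realizable_Cons_diag[where r = S and e = "S + a"])
         (use run_slack 1 assms a in \<open>auto simp: N\<close>)
  next
    case 2
    have "region (S + a - 1) (S + a) N \<subseteq> region (S - 1 + a - 1) (S + a) N"
      by (rule region_antimono) auto
    then show ?thesis
      by (intro realizable_Cons_diag[where r = "S - 1" and e = "S + a"] realizable_mono[OF run_slack])
         (use 2 assms a in \<open>auto simp: N\<close>)
  next
    case 3
    show ?thesis
    proof (cases "\<exists>b. rest = [b] \<and> even b")
      case True
      then obtain b where "rest = [b]" "even b"
        by blast
      then show ?thesis
        using realizable_one_then_even[of S b] 3 pos by (simp add: N)
    next
      case False
      show ?thesis
        by (rule realizable_Cons_diag[where r = "S + 1" and e = "S + 1"])
           (use tight False 3 assms in \<open>auto simp: N\<close>)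
    qed
  next
    case 4
    show ?thesis
      by (rule realizable_Cons_diag_skip[where r = S and e = "S + a - 1"])
         (use value_slack 4 assms in \<open>auto simp: N\<close>)
  qed
qed

end

lemma realizable_dsum_decperms:
  assumes "\<forall>a\<in>set ks. 0 < a"
  shows "(0 < S \<longrightarrow> realizable (region (S - 1) S (S + sum_list ks)) (dsum_decperms ks)) \<and>
    (even S \<and> 0 < S \<longrightarrow> realizable (region S (S - 1) (S + sum_list ks)) (dsum_decperms ks)) \<and>
    (even S \<and> (\<forall>b. ks = [b] \<longrightarrow> odd b) \<longrightarrow>
      realizable (region S S (S + sum_list ks)) (dsum_decperms ks))"
  using assms
proof (induction ks arbitrary: S)
  case Nil
  show ?case by (simp add: realizable_Nil)
next
  case (Cons a rest)
  have a: "0 < a" and pos: "\<forall>b\<in>set rest. 0 < b"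
    using Cons.prems by auto
  have N: "S + sum_list (a # rest) = S + a + sum_list rest"
    by simp
  show ?case
    unfolding N
    using realizable_Cons_run_slack realizable_Cons_value_slack realizable_Cons_tight
      a pos Cons.IH[OF pos, of "S + a"]
    by auto
qed

theorem proposition6p3:
  fixes n :: nat and pi :: "nat list"
  assumes "n \<ge> 1"
    and "is_perm pi" and "length pi = n"
    and "layered pi"
    and "\<not> (pi = decperm n \<and> even n)"
  shows "contains (zeta n) pi"
proof -
  obtain ks where "pi = dsum_decperms ks"
    using assms(4) by (auto simp: layered_def dsum_decperms_def)
  define ks' where "ks' = filter (\<lambda>a. 0 < a) ks"
  have pi: "pi = dsum_decperms ks'"
    by (simp add: \<open>pi = dsum_decperms ks\<close> ks'_def dsum_decperms_filter_pos)
  have pos: "\<forall>a\<in>set ks'. 0 < a"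
    by (simp add: ks'_def)
  have n: "sum_list ks' = n"
    using assms(3) by (simp add: pi length_dsum_decperms)
  have "\<forall>b. ks' = [b] \<longrightarrow> odd b"
    using assms(5) n by (auto simp: pi dsum_decperms_Cons)
  then have "realizable (region 0 0 n) pi"
    using realizable_dsum_decperms[OF pos, of 0] by (simp add: n pi)
  then have "realizable (cells n) pi"
    by (rule realizable_mono) (auto simp: region_def)
  then show ?thesis
    by (rule contains_zeta_if_realizable)
qed

end
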